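(* Let $\widetilde{\Sigma}_1,\widetilde{\Sigma}_2$ be disjoint visibly pushdown alphabets, $\widetilde{\Sigma}=\widetilde{\Sigma}_1\uplus\widetilde{\Sigma}_2$, and $P_1\subseteq\widetilde{\Sigma}_1^*$, $P_2\subseteq\widetilde{\Sigma}_2^*$ well-matched visibly pushdown languages. If $\prec$ is a visibly pushdown contextual order on $\widetilde{\Sigma}$ and $\mathrm{red}_\prec(P_1\parallel P_2)\subseteq\mathsf{wn}(P_1\parallel P_2)$, then $\mathrm{red}_\prec(P_1\parallel P_2)$ is a visibly pushdown language.
   Context: A visibly pushdown (VP) alphabet is a finite alphabet partitioned into calls, returns and internals; $\widetilde{\Sigma}$ has as calls/returns/internals the unions of those of $\widetilde{\Sigma}_1,\widetilde{\Sigma}_2$. Calls and returns in a word are matched like opening and closing parentheses (internals ignored); unmatched ones are pending; a word is well-matched if none are pending. A visibly pushdown automaton (VPA) is a pushdown automaton with bottom symbol $\bot$ that pushes one non-$\bot$ symbol on each call, pops the top symbol on each return (reading $\bot$ on empty stack without removing it) and leaves the stack unchanged on internals; a visibly pushdown language is one accepted by a VPA. Shuffle: $P_1\parallel P_2=\{w\in\widetilde{\Sigma}^*:\Pi_{\widetilde{\Sigma}_i}(w)\in P_i\}$ where $\Pi_{\widetilde{\Sigma}_i}$ erases letters outside $\widetilde{\Sigma}_i$. A word is well-nested if every matched call–return pair consists of two letters from the same $\widetilde{\Sigma}_k$; $\mathsf{wn}(L)$ is the set of well-nested words of $L$. $\mathbb{I}=\{(a,b):a\in\widetilde{\Sigma}_i,b\in\widetilde{\Sigma}_j,i\ne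 j\}$, $\equiv_{\mathbb{I}}$ the least reflexive transitive relation with $uabv\equiv_{\mathbb{I}}ubav$ for $(a,b)\in\mathbb{I}$. A contextual order is a map $\prec$ from $\widetilde{\Sigma}^*$ to strict total orders on $\widetilde{\Sigma}$; it induces $\preceq$ on words: $\sigma\preceq\rho$ iff $\sigma$ is a prefix of $\rho$ or $\sigma=\alpha a\beta$, $\rho=\alpha b\gamma$ with $a\prec_\alpha b$. $\mathrm{red}_\prec(L)=\{w\in L:\forall u\in L,(u\equiv_{\mathbb{I}}w\wedge u\preceq w)\Rightarrow u=w\}$. A contextual order is visibly pushdown if there is a complete deterministic VPA $A$ over $\widetilde{\Sigma}$ and a map $\mathsf{ord}$ from its states to strict total orders on $\widetilde{\Sigma}$ with $\prec_w=\mathsf{ord}(q)$, $q$ the state reached by $A$ after reading $w$, for every $w$. *)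

theory Defs
  imports Main "HOL-Library.Sublist"
begin

text \<open>A letter kind function partitions letters into calls, returns and internals.
  A VP alphabet is a finite set of letters together with this partition.\<close>

datatype letter_kind = Call | Ret | Intl

inductive well_matched :: "('a \<Rightarrow> letter_kind) \<Rightarrow> 'a list \<Rightarrow> bool"
  for \<kappa> where
  wm_nil: "well_matched \<kappa> []"
| wm_int: "\<kappa> a = Intl \<Longrightarrow> well_matched \<kappa> [a]"
| wm_app: "well_matched \<kappa> u \<Longrightarrow> well_matched \<kappa> v \<Longrightarrow> well_matched \<kappa> (u @ v)"
| wm_nest: "\<kappa> c = Call \<Longrightarrow> \<kappa> r = Ret \<Longrightarrow> well_matched \<kappa> u
             \<Longrightarrow> well_matched \<kappa> (c # u @ [r])"

definition matched_pair :: "('a \<Rightarrow> letter_kind) \<Rightarrow> 'a list \<Rightarrow> nat \<Rightarrow> nat \<Rightarrow> bool" where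
  "matched_pair \<kappa> w i j \<longleftrightarrow> i < j \<and> j < length w \<and> \<kappa> (w ! i) = Call \<and> \<kappa> (w ! j) = Ret
     \<and> well_matched \<kappa> (take (j - i - 1) (drop (i + 1) w))"

text \<open>Nondeterministic VPA. Stack symbol None on return transitions stands for
  reading the bottom symbol on an empty stack (which is not removed).\<close>
record ('q, 'g, 'a) vpa =
  states :: "'q set"
  stack_syms :: "'g set"
  initial :: "'q set"
  final :: "'q set"
  call_tr :: "('q \<times> 'a \<times> 'q \<times> 'g) set"
  ret_tr :: "('q \<times> 'a \<times> 'g option \<times> 'q) set"
  int_tr :: "('q \<times> 'a \<times> 'q) set"

definition vpa_wf :: "'a set \<Rightarrow> ('a \<Rightarrow> letter_kind) \<Rightarrow> ('q, 'g, 'a) vpa \<Rightarrow> bool" where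
  "vpa_wf \<Sigma> \<kappa> A \<longleftrightarrow> finite (states A) \<and> finite (stack_syms A)
     \<and> initial A \<subseteq> states A \<and> final A \<subseteq> states A
     \<and> (\<forall>(q, a, q', g) \<in> call_tr A. q \<in> states A \<and> a \<in> \<Sigma> \<and> \<kappa> a = Call \<and> q' \<in> states A \<and> g \<in> stack_syms A)
     \<and> (\<forall>(q, a, g, q') \<in> ret_tr A. q \<in> states A \<and> a \<in> \<Sigma> \<and> \<kappa> a = Ret \<and> q' \<in> states A
                                    \<and> g \<in> insert None (Some ` stack_syms A))
     \<and> (\<forall>(q, a, q') \<in> int_tr A. q \<in> states A \<and> a \<in> \<Sigma> \<and> \<kappa> a = Intl \<and> q' \<in> states A)"

inductive vpa_steps :: "('q, 'g, 'a) vpa \<Rightarrow> ('a \<Rightarrow> letter_kind)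
    \<Rightarrow> 'q \<times> 'g list \<Rightarrow> 'a list \<Rightarrow> 'q \<times> 'g list \<Rightarrow> bool"
  for A \<kappa> where
  st_nil: "vpa_steps A \<kappa> c [] c"
| st_call: "\<kappa> a = Call \<Longrightarrow> (q, a, q', g) \<in> call_tr A \<Longrightarrow> vpa_steps A \<kappa> (q', g # s) w c
             \<Longrightarrow> vpa_steps A \<kappa> (q, s) (a # w) c"
| st_ret: "\<kappa> a = Ret \<Longrightarrow> (q, a, Some g, q') \<in> ret_tr A \<Longrightarrow> vpa_steps A \<kappa> (q', s) w c
             \<Longrightarrow> vpa_steps A \<kappa> (q, g # s) (a # w) c"
| st_ret_bot: "\<kappa> a = Ret \<Longrightarrow> (q, a, None, q') \<in> ret_tr A \<Longrightarrow> vpa_steps A \<kappa> (q', []) w c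
             \<Longrightarrow> vpa_steps A \<kappa> (q, []) (a # w) c"
| st_int: "\<kappa> a = Intl \<Longrightarrow> (q, a, q') \<in> int_tr A \<Longrightarrow> vpa_steps A \<kappa> (q', s) w c
             \<Longrightarrow> vpa_steps A \<kappa> (q, s) (a # w) c"

definition vpa_lang :: "'a set \<Rightarrow> ('a \<Rightarrow> letter_kind) \<Rightarrow> ('q, 'g, 'a) vpa \<Rightarrow> 'a list set" where
  "vpa_lang \<Sigma> \<kappa> A = {w \<in> lists \<Sigma>. \<exists>q0 \<in> initial A. \<exists>q s.
       vpa_steps A \<kappa> (q0, []) w (q, s) \<and> q \<in> final A}"

text \<open>Visibly pushdown language over the VP alphabet (\<Sigma>, \<kappa>). States and stack symbols
  are taken from nat, which is no restriction since both sets are finite.\<close>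
definition is_vpl :: "'a set \<Rightarrow> ('a \<Rightarrow> letter_kind) \<Rightarrow> 'a list set \<Rightarrow> bool" where
  "is_vpl \<Sigma> \<kappa> L \<longleftrightarrow> (\<exists>A :: (nat, nat, 'a) vpa. vpa_wf \<Sigma> \<kappa> A \<and> vpa_lang \<Sigma> \<kappa> A = L)"

text \<open>Complete deterministic VPA (no acceptance component needed here).\<close>
record ('q, 'g, 'a) dvpa =
  dstates :: "'q set"
  dstack_syms :: "'g set"
  dinit :: 'q
  dcall :: "'q \<Rightarrow> 'a \<Rightarrow> 'q \<times> 'g"
  dret :: "'q \<Rightarrow> 'a \<Rightarrow> 'g option \<Rightarrow> 'q"
  dint :: "'q \<Rightarrow> 'a \<Rightarrow> 'q"

definition dvpa_wf :: "'a set \<Rightarrow> ('a \<Rightarrow> letter_kind) \<Rightarrow> ('q, 'g, 'a) dvpa \<Rightarrow> bool" where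
  "dvpa_wf \<Sigma> \<kappa> D \<longleftrightarrow> finite (dstates D) \<and> finite (dstack_syms D) \<and> dinit D \<in> dstates D
     \<and> (\<forall>q \<in> dstates D. \<forall>a \<in> \<Sigma>.
          (\<kappa> a = Call \<longrightarrow> fst (dcall D q a) \<in> dstates D \<and> snd (dcall D q a) \<in> dstack_syms D)
        \<and> (\<kappa> a = Ret \<longrightarrow> (\<forall>g \<in> insert None (Some ` dstack_syms D). dret D q a g \<in> dstates D))
        \<and> (\<kappa> a = Intl \<longrightarrow> dint D q a \<in> dstates D))"

fun dvpa_run :: "('q, 'g, 'a) dvpa \<Rightarrow> ('a \<Rightarrow> letter_kind) \<Rightarrow> 'q \<times> 'g list \<Rightarrow> 'a list \<Rightarrow> 'q \<times> 'g list" where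
  "dvpa_run D \<kappa> c [] = c"
| "dvpa_run D \<kappa> (q, s) (a # w) =
     (case \<kappa> a of
        Call \<Rightarrow> dvpa_run D \<kappa> (fst (dcall D q a), snd (dcall D q a) # s) w
      | Ret \<Rightarrow> (case s of
                  [] \<Rightarrow> dvpa_run D \<kappa> (dret D q a None, []) w
                | g # s' \<Rightarrow> dvpa_run D \<kappa> (dret D q a (Some g), s') w)
      | Intl \<Rightarrow> dvpa_run D \<kappa> (dint D q a, s) w)"

definition dvpa_state :: "('q, 'g, 'a) dvpa \<Rightarrow> ('a \<Rightarrow> letter_kind) \<Rightarrow> 'a list \<Rightarrow> 'q" where
  "dvpa_state D \<kappa> w = fst (dvpa_run D \<kappa> (dinit D, []) w)"

definition shuffle :: "'a set \<Rightarrow> 'a set \<Rightarrow> 'a list set \<Rightarrow> 'a list set \<Rightarrow> 'a list set" where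
  "shuffle \<Sigma>1 \<Sigma>2 P1 P2 = {w \<in> lists (\<Sigma>1 \<union> \<Sigma>2).
      filter (\<lambda>x. x \<in> \<Sigma>1) w \<in> P1 \<and> filter (\<lambda>x. x \<in> \<Sigma>2) w \<in> P2}"

definition well_nested :: "'a set \<Rightarrow> 'a set \<Rightarrow> ('a \<Rightarrow> letter_kind) \<Rightarrow> 'a list \<Rightarrow> bool" where
  "well_nested \<Sigma>1 \<Sigma>2 \<kappa> w \<longleftrightarrow> (\<forall>i j. matched_pair \<kappa> w i j \<longrightarrow>
      (w ! i \<in> \<Sigma>1 \<and> w ! j \<in> \<Sigma>1) \<or> (w ! i \<in> \<Sigma>2 \<and> w ! j \<in> \<Sigma>2))"

definition wn :: "'a set \<Rightarrow> 'a set \<Rightarrow> ('a \<Rightarrow> letter_kind) \<Rightarrow> 'a list set \<Rightarrow> 'a list set" where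
  "wn \<Sigma>1 \<Sigma>2 \<kappa> L = {w \<in> L. well_nested \<Sigma>1 \<Sigma>2 \<kappa> w}"

definition indep :: "'a set \<Rightarrow> 'a set \<Rightarrow> 'a \<Rightarrow> 'a \<Rightarrow> bool" where
  "indep \<Sigma>1 \<Sigma>2 a b \<longleftrightarrow> (a \<in> \<Sigma>1 \<and> b \<in> \<Sigma>2) \<or> (a \<in> \<Sigma>2 \<and> b \<in> \<Sigma>1)"

definition swap_step :: "'a set \<Rightarrow> 'a set \<Rightarrow> 'a list \<Rightarrow> 'a list \<Rightarrow> bool" where
  "swap_step \<Sigma>1 \<Sigma>2 x y \<longleftrightarrow> (\<exists>u a b v. indep \<Sigma>1 \<Sigma>2 a b \<and> x = u @ a # b # v \<and> y = u @ b # a # v)"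

definition indep_equiv :: "'a set \<Rightarrow> 'a set \<Rightarrow> 'a list \<Rightarrow> 'a list \<Rightarrow> bool" where
  "indep_equiv \<Sigma>1 \<Sigma>2 = (swap_step \<Sigma>1 \<Sigma>2)\<^sup>*\<^sup>*"

definition strict_total_on :: "'a set \<Rightarrow> ('a \<Rightarrow> 'a \<Rightarrow> bool) \<Rightarrow> bool" where
  "strict_total_on S R \<longleftrightarrow>
     (\<forall>a \<in> S. \<not> R a a)
   \<and> (\<forall>a \<in> S. \<forall>b \<in> S. \<forall>c \<in> S. R a b \<longrightarrow> R b c \<longrightarrow> R a c)
   \<and> (\<forall>a \<in> S. \<forall>b \<in> S. a \<noteq> b \<longrightarrow> R a b \<or> R b a)"

definition contextual_order :: "'a set \<Rightarrow> ('a list \<Rightarrow> 'a \<Rightarrow> 'a \<Rightarrow> bool) \<Rightarrow> bool" where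
  "contextual_order \<Sigma> prec \<longleftrightarrow> (\<forall>w \<in> lists \<Sigma>. strict_total_on \<Sigma> (prec w))"

definition word_le :: "('a list \<Rightarrow> 'a \<Rightarrow> 'a \<Rightarrow> bool) \<Rightarrow> 'a list \<Rightarrow> 'a list \<Rightarrow> bool" where
  "word_le prec \<sigma> \<rho> \<longleftrightarrow> prefix \<sigma> \<rho> \<or>
     (\<exists>\<alpha> a b \<beta> \<gamma>. \<sigma> = \<alpha> @ a # \<beta> \<and> \<rho> = \<alpha> @ b # \<gamma> \<and> prec \<alpha> a b)"

definition red :: "'a set \<Rightarrow> 'a set \<Rightarrow> ('a list \<Rightarrow> 'a \<Rightarrow> 'a \<Rightarrow> bool) \<Rightarrow> 'a list set \<Rightarrow> 'a list set" where
  "red \<Sigma>1 \<Sigma>2 prec L = {w \<in> L. \<forall>u \<in> L.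
      (indep_equiv \<Sigma>1 \<Sigma>2 u w \<and> word_le prec u w) \<longrightarrow> u = w}"

definition vp_contextual_order :: "'a set \<Rightarrow> ('a \<Rightarrow> letter_kind) \<Rightarrow> ('a list \<Rightarrow> 'a \<Rightarrow> 'a \<Rightarrow> bool) \<Rightarrow> bool" where
  "vp_contextual_order \<Sigma> \<kappa> prec \<longleftrightarrow> contextual_order \<Sigma> prec \<and>
     (\<exists>(D :: (nat, nat, 'a) dvpa) (ord :: nat \<Rightarrow> 'a \<Rightarrow> 'a \<Rightarrow> bool).
        dvpa_wf \<Sigma> \<kappa> D \<and> (\<forall>w \<in> lists \<Sigma>. prec w = ord (dvpa_state D \<kappa> w)))"

end

theory Submission
  imports Defs
begin

text \<open>
  A word of the shuffle fails to be minimal iff it has a factor b v a such that a lies in one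
  component, b v in the other, and a precedes b in the order at the prefix before b: moving a
  in front of b v gives a smaller equivalent word. So minimality says that no letter is
  forbidden by the prefix before it, and the set of forbidden letters obeys a recurrence that
  only consults the order at the current prefix; the deterministic VPA of the contextual order,
  extended by this finite set, checks minimality. The well-nested words of the shuffle are
  accepted by running the two component VPAs on one stack whose symbols remember their
  component, since well-nestedness makes every return pop a symbol of its own component. As
  the minimal words are well-nested by hypothesis, they are exactly the words accepted by both
  automata.
\<close>

section \<open>Visibly pushdown automata\<close>

lemma vpa_steps_append:
  "vpa_steps A \<kappa> c x c' \<Longrightarrow> vpa_steps A \<kappa> c' y c'' \<Longrightarrow> vpa_steps A \<kappa> c (x @ y) c''"
  by (induction rule: vpa_steps.induct) (auto intro: vpa_steps.intros)

lemma vpa_steps_Nil_iff [simp]: "vpa_steps A \<kappa> c [] c' \<longleftrightarrow> c' = c"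
  by (auto elim: vpa_steps.cases intro: vpa_steps.intros)

lemma vpa_steps_Cons_iff:
  "vpa_steps A \<kappa> (q, s) (a # w) c \<longleftrightarrow>
     (\<kappa> a = Call \<and> (\<exists>q' g. (q, a, q', g) \<in> call_tr A \<and> vpa_steps A \<kappa> (q', g # s) w c))
   \<or> (\<kappa> a = Ret \<and> (\<exists>g s' q'. s = g # s' \<and> (q, a, Some g, q') \<in> ret_tr A \<and> vpa_steps A \<kappa> (q', s') w c))
   \<or> (\<kappa> a = Ret \<and> s = [] \<and> (\<exists>q'. (q, a, None, q') \<in> ret_tr A \<and> vpa_steps A \<kappa> (q', []) w c))
   \<or> (\<kappa> a = Intl \<and> (\<exists>q'. (q, a, q') \<in> int_tr A \<and> vpa_steps A \<kappa> (q', s) w c))"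
  apply (rule iffI)
   apply (erule vpa_steps.cases; auto)
  apply (auto intro: vpa_steps.intros)
  done

lemma vpa_wf_call:
  "vpa_wf \<Sigma> \<kappa> A \<Longrightarrow> (q, a, q', g) \<in> call_tr A \<Longrightarrow>
     q \<in> states A \<and> a \<in> \<Sigma> \<and> \<kappa> a = Call \<and> q' \<in> states A \<and> g \<in> stack_syms A"
  unfolding vpa_wf_def by (elim conjE, drule (1) bspec, simp)

lemma vpa_wf_ret:
  "vpa_wf \<Sigma> \<kappa> A \<Longrightarrow> (q, a, g, q') \<in> ret_tr A \<Longrightarrow>
     q \<in> states A \<and> a \<in> \<Sigma> \<and> \<kappa> a = Ret \<and> q' \<in> states A \<and> g \<in> insert None (Some ` stack_syms A)"
  unfolding vpa_wf_def by (elim conjE, drule (1) bspec, simp)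

lemma vpa_wf_int:
  "vpa_wf \<Sigma> \<kappa> A \<Longrightarrow> (q, a, q') \<in> int_tr A \<Longrightarrow>
     q \<in> states A \<and> a \<in> \<Sigma> \<and> \<kappa> a = Intl \<and> q' \<in> states A"
  unfolding vpa_wf_def by (elim conjE, drule (1) bspec, simp)

lemma vpa_steps_states:
  "vpa_steps A \<kappa> c w c' \<Longrightarrow> vpa_wf \<Sigma> \<kappa> A \<Longrightarrow> fst c \<in> states A \<Longrightarrow> fst c' \<in> states A"
  by (induction rule: vpa_steps.induct) (auto dest: vpa_wf_call vpa_wf_ret vpa_wf_int)

lemma dvpa_run_append:
  "dvpa_run D \<kappa> c (x @ y) = dvpa_run D \<kappa> (dvpa_run D \<kappa> c x) y"
proof (induction x arbitrary: c)
  case (Cons a x)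
  obtain q s where "c = (q, s)" by force
  then show ?case using Cons.IH by (cases "\<kappa> a"; cases s) simp_all
qed simp

lemma dvpa_run_Cons: "dvpa_run D \<kappa> c (a # w) = dvpa_run D \<kappa> (dvpa_run D \<kappa> c [a]) w"
  using dvpa_run_append[of D \<kappa> c "[a]" w] by simp

lemma dvpa_run_step_closed:
  assumes "dvpa_wf \<Sigma> \<kappa> D" and "a \<in> \<Sigma>" and "q \<in> dstates D" and "set s \<subseteq> dstack_syms D"
  shows "fst (dvpa_run D \<kappa> (q, s) [a]) \<in> dstates D \<and> set (snd (dvpa_run D \<kappa> (q, s) [a])) \<subseteq> dstack_syms D"
proof -
  have "(\<kappa> a = Call \<longrightarrow> fst (dcall D q a) \<in> dstates D \<and> snd (dcall D q a) \<in> dstack_syms D)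
      \<and> (\<kappa> a = Ret \<longrightarrow> (\<forall>g \<in> insert None (Some ` dstack_syms D). dret D q a g \<in> dstates D))
      \<and> (\<kappa> a = Intl \<longrightarrow> dint D q a \<in> dstates D)"
    using assms(1-3) unfolding dvpa_wf_def by blast
  with assms(4) show ?thesis
    by (cases "\<kappa> a"; cases s) auto
qed

definition vpa_rename :: "('q \<Rightarrow> 'p) \<Rightarrow> ('g \<Rightarrow> 'h) \<Rightarrow> ('q, 'g, 'a) vpa \<Rightarrow> ('p, 'h, 'a) vpa" where
  "vpa_rename f h A = \<lparr> states = f ` states A, stack_syms = h ` stack_syms A,
     initial = f ` initial A, final = f ` final A,
     call_tr = (\<lambda>(q, a, q', g). (f q, a, f q', h g)) ` call_tr A,
     ret_tr = (\<lambda>(q, a, g, q'). (f q, a, map_option h g, f q')) ` ret_tr A,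
     int_tr = (\<lambda>(q, a, q'). (f q, a, f q')) ` int_tr A \<rparr>"

lemma vpa_steps_rename:
  "vpa_steps A \<kappa> c w c' \<Longrightarrow>
     vpa_steps (vpa_rename f h A) \<kappa> (f (fst c), map h (snd c)) w (f (fst c'), map h (snd c'))"
proof (induction rule: vpa_steps.induct)
  case (st_call a q q' g s w c)
  then have "(f q, a, f q', h g) \<in> call_tr (vpa_rename f h A)" by (force simp: vpa_rename_def)
  with st_call show ?case by (auto intro: vpa_steps.intros)
next
  case (st_ret a q g q' s w c)
  then have "(f q, a, Some (h g), f q') \<in> ret_tr (vpa_rename f h A)" by (force simp: vpa_rename_def)
  with st_ret show ?case by (auto intro: vpa_steps.intros)
next
  case (st_ret_bot a q q' w c)
  then have "(f q, a, None, f q') \<in> ret_tr (vpa_rename f h A)" by (force simp: vpa_rename_def)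
  with st_ret_bot show ?case by (auto intro: vpa_steps.intros)
next
  case (st_int a q q' s w c)
  then have "(f q, a, f q') \<in> int_tr (vpa_rename f h A)" by (force simp: vpa_rename_def)
  with st_int show ?case by (auto intro: vpa_steps.intros)
qed (auto intro: vpa_steps.intros)

lemma vpa_lang_subset_rename: "vpa_lang \<Sigma> \<kappa> A \<subseteq> vpa_lang \<Sigma> \<kappa> (vpa_rename f h A)"
  unfolding vpa_lang_def by (force simp: vpa_rename_def dest: vpa_steps_rename)

lemma vpa_rename_rename: "vpa_rename f' h' (vpa_rename f h A) = vpa_rename (f' \<circ> f) (h' \<circ> h) A"
  by (simp add: vpa_rename_def image_image option.map_comp case_prod_beta)

lemma image_eq_self: "(\<And>x. x \<in> X \<Longrightarrow> F x = x) \<Longrightarrow> F ` X = X"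
  by force

lemma vpa_rename_id_on:
  assumes wf: "vpa_wf \<Sigma> \<kappa> A" and f: "\<forall>q \<in> states A. f q = q" and h: "\<forall>g \<in> stack_syms A. h g = g"
  shows "vpa_rename f h A = A"
proof -
  have "initial A \<subseteq> states A" "final A \<subseteq> states A"
    using wf by (simp_all add: vpa_wf_def)
  then have "f ` states A = states A" "f ` initial A = initial A" "f ` final A = final A"
      "h ` stack_syms A = stack_syms A"
    using f h by (auto intro!: image_eq_self)
  moreover have "(\<lambda>(q, a, q', g). (f q, a, f q', h g)) ` call_tr A = call_tr A"
    by (rule image_eq_self, clarify, drule vpa_wf_call[OF wf]) (auto simp: f h)
  moreover have "(\<lambda>(q, a, g, q'). (f q, a, map_option h g, f q')) ` ret_tr A = ret_tr A"
    by (rule image_eq_self, clarify, drule vpa_wf_ret[OF wf]) (auto simp: f h)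
  moreover have "(\<lambda>(q, a, q'). (f q, a, f q')) ` int_tr A = int_tr A"
    by (rule image_eq_self, clarify, drule vpa_wf_int[OF wf]) (auto simp: f h)
  ultimately show ?thesis
    unfolding vpa_rename_def by simp
qed

lemma is_vpl_vpa_lang:
  fixes A :: "('q, 'g, 'a) vpa"
  assumes wf: "vpa_wf \<Sigma> \<kappa> A"
  shows "is_vpl \<Sigma> \<kappa> (vpa_lang \<Sigma> \<kappa> A)"
proof -
  obtain f :: "'q \<Rightarrow> nat" where f: "inj_on f (states A)"
    using wf finite_imp_inj_to_nat_seg unfolding vpa_wf_def by meson
  obtain h :: "'g \<Rightarrow> nat" where h: "inj_on h (stack_syms A)"
    using wf finite_imp_inj_to_nat_seg unfolding vpa_wf_def by meson
  let ?B = "vpa_rename f h A"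
  have "vpa_wf \<Sigma> \<kappa> ?B"
    using wf unfolding vpa_wf_def vpa_rename_def by (auto 0 3)
  moreover have "vpa_lang \<Sigma> \<kappa> ?B = vpa_lang \<Sigma> \<kappa> A"
  proof -
    have "vpa_rename (inv_into (states A) f) (inv_into (stack_syms A) h) ?B = A"
      unfolding vpa_rename_rename using f h by (intro vpa_rename_id_on[OF wf]) auto
    then show ?thesis
      using vpa_lang_subset_rename by (metis subset_antisym)
  qed
  ultimately show ?thesis unfolding is_vpl_def by blast
qed

definition vpa_inter :: "('p, 'g, 'a) vpa \<Rightarrow> ('q, 'h, 'a) vpa \<Rightarrow> ('p \<times> 'q, 'g \<times> 'h, 'a) vpa" where
  "vpa_inter A B = \<lparr> states = states A \<times> states B, stack_syms = stack_syms A \<times> stack_syms B,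
     initial = initial A \<times> initial B, final = final A \<times> final B,
     call_tr = {((p, q), a, (p', q'), (g, h)) | p q a p' q' g h.
                  (p, a, p', g) \<in> call_tr A \<and> (q, a, q', h) \<in> call_tr B},
     ret_tr = {((p, q), a, Some (g, h), (p', q')) | p q a p' q' g h.
                  (p, a, Some g, p') \<in> ret_tr A \<and> (q, a, Some h, q') \<in> ret_tr B}
            \<union> {((p, q), a, None, (p', q')) | p q a p' q'.
                  (p, a, None, p') \<in> ret_tr A \<and> (q, a, None, q') \<in> ret_tr B},
     int_tr = {((p, q), a, (p', q')) | p q a p' q'. (p, a, p') \<in> int_tr A \<and> (q, a, q') \<in> int_tr B} \<rparr>"

lemma vpa_wf_inter:
  assumes A: "vpa_wf \<Sigma> \<kappa> A" and B: "vpa_wf \<Sigma> \<kappa> B"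
  shows "vpa_wf \<Sigma> \<kappa> (vpa_inter A B)"
proof -
  have "finite (states A)" "finite (stack_syms A)" "initial A \<subseteq> states A" "final A \<subseteq> states A"
    "finite (states B)" "finite (stack_syms B)" "initial B \<subseteq> states B" "final B \<subseteq> states B"
    using A B by (simp_all add: vpa_wf_def)
  then show ?thesis
    unfolding vpa_wf_def vpa_inter_def
    by (auto dest: vpa_wf_call[OF A] vpa_wf_call[OF B] vpa_wf_ret[OF A] vpa_wf_ret[OF B]
        vpa_wf_int[OF A] vpa_wf_int[OF B])
qed

lemma vpa_steps_interD:
  "vpa_steps (vpa_inter A B) \<kappa> c w c' \<Longrightarrow>
     vpa_steps A \<kappa> (fst (fst c), map fst (snd c)) w (fst (fst c'), map fst (snd c'))
   \<and> vpa_steps B \<kappa> (snd (fst c), map snd (snd c)) w (snd (fst c'), map snd (snd c'))"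
  by (induction rule: vpa_steps.induct) (auto simp: vpa_inter_def intro: vpa_steps.intros)

text \<open>Both automata read the same word, so visibility keeps their stacks of equal length.\<close>

lemma vpa_steps_interI:
  "vpa_steps A \<kappa> c w c' \<Longrightarrow> vpa_steps B \<kappa> d w d' \<Longrightarrow> length (snd c) = length (snd d) \<Longrightarrow>
     vpa_steps (vpa_inter A B) \<kappa> ((fst c, fst d), zip (snd c) (snd d)) w
       ((fst c', fst d'), zip (snd c') (snd d'))"
proof (induction arbitrary: d rule: vpa_steps.induct)
  case (st_call a p p' g s w c)
  obtain q t where d: "d = (q, t)" by force
  with st_call.prems(1) st_call.hyps(1) obtain q' h
    where tr: "(q, a, q', h) \<in> call_tr B" and run: "vpa_steps B \<kappa> (q', h # t) w d'"
    by (auto simp: vpa_steps_Cons_iff)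
  have "((p, q), a, (p', q'), (g, h)) \<in> call_tr (vpa_inter A B)"
    using st_call.hyps(2) tr by (auto simp: vpa_inter_def)
  then show ?case
    using st_call.IH[OF run] st_call.hyps(1) st_call.prems(2) d by (auto intro: vpa_steps.st_call)
next
  case (st_ret a p g p' s w c)
  obtain q t where d: "d = (q, t)" by force
  with st_ret.prems(1,2) st_ret.hyps(1) obtain h t0 q'
    where t: "t = h # t0" and tr: "(q, a, Some h, q') \<in> ret_tr B" and run: "vpa_steps B \<kappa> (q', t0) w d'"
    by (auto simp: vpa_steps_Cons_iff)
  have "((p, q), a, Some (g, h), (p', q')) \<in> ret_tr (vpa_inter A B)"
    using st_ret.hyps(2) tr by (auto simp: vpa_inter_def)
  then show ?case
    using st_ret.IH[OF run] st_ret.hyps(1) st_ret.prems(2) d t by (auto intro: vpa_steps.st_ret)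
next
  case (st_ret_bot a p p' w c)
  obtain q t where d: "d = (q, t)" by force
  with st_ret_bot.prems(1,2) st_ret_bot.hyps(1) obtain q'
    where t: "t = []" and tr: "(q, a, None, q') \<in> ret_tr B" and run: "vpa_steps B \<kappa> (q', []) w d'"
    by (auto simp: vpa_steps_Cons_iff)
  have "((p, q), a, None, (p', q')) \<in> ret_tr (vpa_inter A B)"
    using st_ret_bot.hyps(2) tr by (auto simp: vpa_inter_def)
  then show ?case
    using st_ret_bot.IH[OF run] st_ret_bot.hyps(1) d t by (auto intro: vpa_steps.st_ret_bot)
next
  case (st_int a p p' s w c)
  obtain q t where d: "d = (q, t)" by force
  with st_int.prems(1) st_int.hyps(1) obtain q'
    where tr: "(q, a, q') \<in> int_tr B" and run: "vpa_steps B \<kappa> (q', t) w d'"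
    by (auto simp: vpa_steps_Cons_iff)
  have "((p, q), a, (p', q')) \<in> int_tr (vpa_inter A B)"
    using st_int.hyps(2) tr by (auto simp: vpa_inter_def)
  then show ?case
    using st_int.IH[OF run] st_int.hyps(1) st_int.prems(2) d by (auto intro: vpa_steps.st_int)
qed simp

lemma vpa_lang_inter: "vpa_lang \<Sigma> \<kappa> (vpa_inter A B) = vpa_lang \<Sigma> \<kappa> A \<inter> vpa_lang \<Sigma> \<kappa> B"
proof (intro set_eqI iffI)
  fix w assume "w \<in> vpa_lang \<Sigma> \<kappa> (vpa_inter A B)"
  then show "w \<in> vpa_lang \<Sigma> \<kappa> A \<inter> vpa_lang \<Sigma> \<kappa> B"
    unfolding vpa_lang_def by (fastforce simp: vpa_inter_def dest: vpa_steps_interD)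
next
  fix w assume "w \<in> vpa_lang \<Sigma> \<kappa> A \<inter> vpa_lang \<Sigma> \<kappa> B"
  then obtain p q p' q' s t
    where "w \<in> lists \<Sigma>" "p \<in> initial A" "q \<in> initial B" "p' \<in> final A" "q' \<in> final B"
    "vpa_steps A \<kappa> (p, []) w (p', s)" "vpa_steps B \<kappa> (q, []) w (q', t)"
    unfolding vpa_lang_def by blast
  then show "w \<in> vpa_lang \<Sigma> \<kappa> (vpa_inter A B)"
    using vpa_steps_interI[of A \<kappa> "(p, [])" w "(p', s)" B "(q, [])" "(q', t)"]
    unfolding vpa_lang_def by (force simp: vpa_inter_def)
qed

section \<open>Pending calls\<close>

text \<open>Innermost call first; a return without pending call is ignored.\<close>

definition pending_calls :: "('a \<Rightarrow> letter_kind) \<Rightarrow> 'a list \<Rightarrow> 'a list" where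
  "pending_calls \<kappa> x = foldl (\<lambda>st a. case \<kappa> a of Call \<Rightarrow> a # st | Ret \<Rightarrow> tl st | Intl \<Rightarrow> st) [] x"

lemma pending_calls_Nil [simp]: "pending_calls \<kappa> [] = []"
  by (simp add: pending_calls_def)

lemma pending_calls_snoc [simp]:
  "pending_calls \<kappa> (x @ [a]) =
     (case \<kappa> a of Call \<Rightarrow> a # pending_calls \<kappa> x | Ret \<Rightarrow> tl (pending_calls \<kappa> x) | Intl \<Rightarrow> pending_calls \<kappa> x)"
  by (cases "\<kappa> a") (simp_all add: pending_calls_def)

lemma pending_calls_kind: "c \<in> set (pending_calls \<kappa> x) \<Longrightarrow> \<kappa> c = Call"
proof (induction x rule: rev_induct)
  case (snoc a x)
  then show ?case by (cases "\<kappa> a"; cases "pending_calls \<kappa> x") auto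
qed simp

definition height :: "('a \<Rightarrow> letter_kind) \<Rightarrow> 'a list \<Rightarrow> int" where
  "height \<kappa> x = int (length (filter (\<lambda>c. \<kappa> c = Call) x)) - int (length (filter (\<lambda>c. \<kappa> c = Ret) x))"

lemma height_Nil [simp]: "height \<kappa> [] = 0"
  by (simp add: height_def)

lemma height_Cons [simp]: "height \<kappa> (a # x) = (case \<kappa> a of Call \<Rightarrow> 1 | Ret \<Rightarrow> -1 | Intl \<Rightarrow> 0) + height \<kappa> x"
  by (cases "\<kappa> a") (auto simp: height_def)

lemma height_append [simp]: "height \<kappa> (x @ y) = height \<kappa> x + height \<kappa> y"
  by (simp add: height_def)

lemma height_filter_split: "height \<kappa> x = height \<kappa> (filter P x) + height \<kappa> (filter (\<lambda>a. \<not> P a) x)"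
  by (induction x) auto

lemma height_le_length_pending_calls: "height \<kappa> x \<le> int (length (pending_calls \<kappa> x))"
proof (induction x rule: rev_induct)
  case (snoc a x)
  then show ?case by (cases "\<kappa> a") auto
qed simp

lemma well_matched_height:
  "well_matched \<kappa> u \<Longrightarrow> height \<kappa> u = 0 \<and> (\<forall>p. prefix p u \<longrightarrow> 0 \<le> height \<kappa> p)"
proof (induction rule: well_matched.induct)
  case (wm_int a)
  then show ?case by (auto simp: prefix_Cons)
next
  case (wm_app u v)
  then show ?case by (auto simp: prefix_append)
next
  case (wm_nest c r u)
  then show ?case by (auto simp: prefix_Cons prefix_append)
qed simp

lemma pending_calls_ConsE:
  assumes "pending_calls \<kappa> x = c # rest"
  obtains x1 z where "x = x1 @ c # z" and "well_matched \<kappa> z" and "pending_calls \<kappa> x1 = rest"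
  using assms
proof (induction x arbitrary: c rest thesis rule: length_induct)
  case (1 x)
  show ?case
  proof (cases x rule: rev_exhaust)
    case Nil
    with "1.prems"(2) show ?thesis by simp
  next
    case (snoc x0 b)
    show ?thesis
    proof (cases "\<kappa> b")
      case Call
      with "1.prems" snoc show ?thesis by (auto intro: wm_nil)
    next
      case Intl
      with "1.prems"(2) snoc have "pending_calls \<kappa> x0 = c # rest" by simp
      with "1.IH" snoc obtain x1 z where "x0 = x1 @ c # z" "well_matched \<kappa> z" "pending_calls \<kappa> x1 = rest"
        by (metis length_append_singleton lessI)
      with Intl snoc show ?thesis
        by (intro "1.prems"(1)[of x1 "z @ [b]"]) (auto intro: wm_app wm_int)
    next
      case Ret
      with "1.prems"(2) snoc obtain c' where x0: "pending_calls \<kappa> x0 = c' # c # rest"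
        by (cases "pending_calls \<kappa> x0") auto
      then have "\<kappa> c' = Call" by (metis list.set_intros(1) pending_calls_kind)
      from "1.IH" snoc x0 obtain x1' z' where
        x1': "x0 = x1' @ c' # z'" "well_matched \<kappa> z'" "pending_calls \<kappa> x1' = c # rest"
        by (metis length_append_singleton lessI)
      from "1.IH" snoc x1' obtain x1 z where
        x1: "x1' = x1 @ c # z" "well_matched \<kappa> z" "pending_calls \<kappa> x1 = rest"
        by (metis length_append length_append_singleton less_SucI less_add_Suc1)
      have "well_matched \<kappa> (z @ c' # z' @ [b])"
        using x1(2) x1'(2) \<open>\<kappa> c' = Call\<close> Ret by (intro wm_app wm_nest)
      with snoc x1 x1' show ?thesis
        by (intro "1.prems"(1)[of x1 "z @ c' # z' @ [b]"]) auto
    qed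
  qed
qed

lemma well_nested_return_matches_pending_call:
  assumes disj: "\<Sigma>1 \<inter> \<Sigma>2 = {}" and w: "w \<in> lists (\<Sigma>1 \<union> \<Sigma>2)"
    and wm1: "well_matched \<kappa> (filter (\<lambda>x. x \<in> \<Sigma>1) w)" and wm2: "well_matched \<kappa> (filter (\<lambda>x. x \<in> \<Sigma>2) w)"
    and wn: "well_nested \<Sigma>1 \<Sigma>2 \<kappa> w" and dec: "w = x @ a # y" and ret: "\<kappa> a = Ret"
  shows "\<exists>c rest. pending_calls \<kappa> x = c # rest \<and> (c \<in> \<Sigma>1 \<longleftrightarrow> a \<in> \<Sigma>1)"
proof -
  have "filter (\<lambda>x. x \<notin> \<Sigma>1) (x @ [a]) = filter (\<lambda>x. x \<in> \<Sigma>2) (x @ [a])"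
    using w dec disj by (intro filter_cong) auto
  then have "height \<kappa> (x @ [a]) =
      height \<kappa> (filter (\<lambda>x. x \<in> \<Sigma>1) (x @ [a])) + height \<kappa> (filter (\<lambda>x. x \<in> \<Sigma>2) (x @ [a]))"
    using height_filter_split by metis
  moreover have "prefix (filter (\<lambda>x. x \<in> \<Sigma>i) (x @ [a])) (filter (\<lambda>x. x \<in> \<Sigma>i) w)" for \<Sigma>i
    unfolding dec by (simp add: prefix_def)
  then have "0 \<le> height \<kappa> (filter (\<lambda>x. x \<in> \<Sigma>1) (x @ [a]))" "0 \<le> height \<kappa> (filter (\<lambda>x. x \<in> \<Sigma>2) (x @ [a]))"
    using well_matched_height[OF wm1] well_matched_height[OF wm2] by blast+
  ultimately have "0 \<le> height \<kappa> (x @ [a])"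
    by linarith
  then have "pending_calls \<kappa> x \<noteq> []"
    using height_le_length_pending_calls[of \<kappa> x] ret by auto
  then obtain c rest where pc: "pending_calls \<kappa> x = c # rest"
    by (cases "pending_calls \<kappa> x") auto
  then obtain x1 z where x: "x = x1 @ c # z" "well_matched \<kappa> z"
    by (rule pending_calls_ConsE)
  have "\<kappa> c = Call"
    using pc by (metis list.set_intros(1) pending_calls_kind)
  with x dec ret have "matched_pair \<kappa> w (length x1) (length x)"
    unfolding matched_pair_def by (simp add: nth_append)
  with wn have "(c \<in> \<Sigma>1 \<and> a \<in> \<Sigma>1) \<or> (c \<in> \<Sigma>2 \<and> a \<in> \<Sigma>2)"
    unfolding well_nested_def using x dec by (fastforce simp: nth_append)
  with disj pc show ?thesis
    by blast
qed

section \<open>Minimal representatives\<close>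

text \<open>No minimal word has prefix \<alpha> a for a forbidden a: the letter a commutes to the front
  of b v and precedes b in the order at \<alpha>1.\<close>

definition forbidden :: "'a set \<Rightarrow> 'a set \<Rightarrow> ('a list \<Rightarrow> 'a \<Rightarrow> 'a \<Rightarrow> bool) \<Rightarrow> 'a list \<Rightarrow> 'a set" where
  "forbidden \<Sigma>1 \<Sigma>2 prec \<alpha> =
     {a. \<exists>\<alpha>1 b v. \<alpha> = \<alpha>1 @ b # v \<and> (\<forall>c \<in> set (b # v). indep \<Sigma>1 \<Sigma>2 a c) \<and> prec \<alpha>1 a b}"

definition forbidden_update :: "'a set \<Rightarrow> 'a set \<Rightarrow> ('a \<Rightarrow> 'a \<Rightarrow> bool) \<Rightarrow> 'a \<Rightarrow> 'a set \<Rightarrow> 'a set" where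
  "forbidden_update \<Sigma>1 \<Sigma>2 r c F = {a \<in> F. indep \<Sigma>1 \<Sigma>2 a c} \<union> {a. indep \<Sigma>1 \<Sigma>2 a c \<and> r a c}"

lemma forbidden_Nil [simp]: "forbidden \<Sigma>1 \<Sigma>2 prec [] = {}"
  by (simp add: forbidden_def)

lemma forbidden_snoc:
  "forbidden \<Sigma>1 \<Sigma>2 prec (\<alpha> @ [c]) = forbidden_update \<Sigma>1 \<Sigma>2 (prec \<alpha>) c (forbidden \<Sigma>1 \<Sigma>2 prec \<alpha>)"
proof (intro set_eqI iffI)
  fix a assume "a \<in> forbidden \<Sigma>1 \<Sigma>2 prec (\<alpha> @ [c])"
  then obtain \<alpha>1 b v where dec: "\<alpha> @ [c] = \<alpha>1 @ b # v" and ind: "\<forall>d \<in> set (b # v). indep \<Sigma>1 \<Sigma>2 a d"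
    and "prec \<alpha>1 a b"
    unfolding forbidden_def by blast
  then show "a \<in> forbidden_update \<Sigma>1 \<Sigma>2 (prec \<alpha>) c (forbidden \<Sigma>1 \<Sigma>2 prec \<alpha>)"
    by (cases v rule: rev_exhaust) (auto simp: forbidden_update_def forbidden_def)
next
  fix a assume "a \<in> forbidden_update \<Sigma>1 \<Sigma>2 (prec \<alpha>) c (forbidden \<Sigma>1 \<Sigma>2 prec \<alpha>)"
  then show "a \<in> forbidden \<Sigma>1 \<Sigma>2 prec (\<alpha> @ [c])"
    unfolding forbidden_update_def forbidden_def by (fastforce intro: exI[of _ "[]"])
qed

lemma forbidden_update_subset: "forbidden_update \<Sigma>1 \<Sigma>2 r c F \<subseteq> \<Sigma>1 \<union> \<Sigma>2"
  by (auto simp: forbidden_update_def indep_def)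

lemma indep_equiv_projections:
  assumes "\<Sigma>1 \<inter> \<Sigma>2 = {}" and "indep_equiv \<Sigma>1 \<Sigma>2 u w"
  shows "set u = set w \<and> length u = length w
    \<and> filter (\<lambda>x. x \<in> \<Sigma>1) u = filter (\<lambda>x. x \<in> \<Sigma>1) w \<and> filter (\<lambda>x. x \<in> \<Sigma>2) u = filter (\<lambda>x. x \<in> \<Sigma>2) w"
  using assms(2) unfolding indep_equiv_def
  by (induction rule: rtranclp_induct) (use assms(1) in \<open>auto simp: swap_step_def indep_def\<close>)

lemma indep_equiv_shuffle:
  assumes "\<Sigma>1 \<inter> \<Sigma>2 = {}" and "indep_equiv \<Sigma>1 \<Sigma>2 u w" and "w \<in> shuffle \<Sigma>1 \<Sigma>2 P1 P2"
  shows "u \<in> shuffle \<Sigma>1 \<Sigma>2 P1 P2"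
  using indep_equiv_projections[OF assms(1,2)] assms(3) by (simp add: shuffle_def in_lists_conv_set)

lemma indep_equiv_commute:
  "\<forall>c \<in> set v. indep \<Sigma>1 \<Sigma>2 a c \<Longrightarrow> indep_equiv \<Sigma>1 \<Sigma>2 (p @ a # v @ q) (p @ v @ a # q)"
proof (induction v arbitrary: p)
  case (Cons c v)
  then have "swap_step \<Sigma>1 \<Sigma>2 (p @ a # c # v @ q) ((p @ [c]) @ a # v @ q)"
    unfolding swap_step_def by force
  moreover have "indep_equiv \<Sigma>1 \<Sigma>2 ((p @ [c]) @ a # v @ q) ((p @ [c]) @ v @ a # q)"
    using Cons.IH[of "p @ [c]"] Cons.prems by simp
  ultimately show ?case
    unfolding indep_equiv_def by (simp add: converse_rtranclp_into_rtranclp)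
qed (simp add: indep_equiv_def)

lemma filter_eq_first_mismatch:
  assumes "filter P (\<alpha> @ a # \<beta>) = filter P (\<alpha> @ b # \<gamma>)" and "P a" and "a \<noteq> b"
  obtains us vs where "\<not> P b" and "\<gamma> = us @ a # vs" and "\<forall>c \<in> set us. \<not> P c"
proof -
  have "\<not> P b" and "filter P \<gamma> = a # filter P \<beta>"
    using assms by (auto split: if_splits)
  then show ?thesis
    using that by (auto dest: filter_eq_ConsD)
qed

lemma forbidden_imp_not_red:
  assumes disj: "\<Sigma>1 \<inter> \<Sigma>2 = {}" and w: "w = \<alpha> @ a # y" and a: "a \<in> forbidden \<Sigma>1 \<Sigma>2 prec \<alpha>"
  shows "w \<notin> red \<Sigma>1 \<Sigma>2 prec (shuffle \<Sigma>1 \<Sigma>2 P1 P2)"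
proof
  assume red: "w \<in> red \<Sigma>1 \<Sigma>2 prec (shuffle \<Sigma>1 \<Sigma>2 P1 P2)"
  from w a obtain \<alpha>1 b v where wdec: "w = \<alpha>1 @ (b # v) @ a # y"
    and ind: "\<forall>c \<in> set (b # v). indep \<Sigma>1 \<Sigma>2 a c" and "prec \<alpha>1 a b"
    unfolding forbidden_def by auto
  let ?u = "\<alpha>1 @ a # (b # v) @ y"
  have equiv: "indep_equiv \<Sigma>1 \<Sigma>2 ?u w"
    unfolding wdec using ind by (rule indep_equiv_commute)
  moreover have "?u \<in> shuffle \<Sigma>1 \<Sigma>2 P1 P2"
    using indep_equiv_shuffle[OF disj equiv] red by (simp add: red_def)
  moreover have "word_le prec ?u w"
    unfolding word_le_def wdec using \<open>prec \<alpha>1 a b\<close> by fastforce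
  moreover have "?u \<noteq> w"
    using ind disj unfolding wdec by (auto simp: indep_def)
  ultimately show False
    using red unfolding red_def by blast
qed

lemma smaller_equiv_imp_forbidden:
  assumes disj: "\<Sigma>1 \<inter> \<Sigma>2 = {}" and co: "contextual_order (\<Sigma>1 \<union> \<Sigma>2) prec"
    and ul: "u \<in> lists (\<Sigma>1 \<union> \<Sigma>2)" and wl: "w \<in> lists (\<Sigma>1 \<union> \<Sigma>2)"
    and equiv: "indep_equiv \<Sigma>1 \<Sigma>2 u w" and le: "word_le prec u w" and "u \<noteq> w"
  shows "\<exists>\<alpha> a y. w = \<alpha> @ a # y \<and> a \<in> forbidden \<Sigma>1 \<Sigma>2 prec \<alpha>"
proof -
  have proj: "set u = set w \<and> length u = length w
      \<and> filter (\<lambda>x. x \<in> \<Sigma>1) u = filter (\<lambda>x. x \<in> \<Sigma>1) w \<and> filter (\<lambda>x. x \<in> \<Sigma>2) u = filter (\<lambda>x. x \<in> \<Sigma>2) w"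
    by (rule indep_equiv_projections[OF disj equiv])
  with \<open>u \<noteq> w\<close> have "\<not> prefix u w"
    by (auto simp: prefix_def)
  with le obtain \<alpha> a b \<beta> \<gamma> where u: "u = \<alpha> @ a # \<beta>" and wd: "w = \<alpha> @ b # \<gamma>" and "prec \<alpha> a b"
    unfolding word_le_def by blast
  moreover have "\<alpha> \<in> lists (\<Sigma>1 \<union> \<Sigma>2)" "a \<in> \<Sigma>1 \<union> \<Sigma>2"
    using ul u by auto
  ultimately have "a \<noteq> b"
    using co unfolding contextual_order_def strict_total_on_def by blast
  obtain S where S: "S = \<Sigma>1 \<or> S = \<Sigma>2" "a \<in> S" "filter (\<lambda>x. x \<in> S) u = filter (\<lambda>x. x \<in> S) w"
    using proj \<open>a \<in> \<Sigma>1 \<union> \<Sigma>2\<close> by blast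
  obtain us vs where "b \<notin> S" and \<gamma>: "\<gamma> = us @ a # vs" and "\<forall>c \<in> set us. c \<notin> S"
    by (rule filter_eq_first_mismatch[OF S(3)[unfolded u wd] S(2) \<open>a \<noteq> b\<close>])
  moreover have "set (b # us) \<subseteq> \<Sigma>1 \<union> \<Sigma>2"
    using wl wd \<gamma> by auto
  ultimately have "\<forall>c \<in> set (b # us). indep \<Sigma>1 \<Sigma>2 a c"
    using S disj by (auto simp: indep_def)
  then have "a \<in> forbidden \<Sigma>1 \<Sigma>2 prec (\<alpha> @ b # us)"
    unfolding forbidden_def using \<open>prec \<alpha> a b\<close> by blast
  with wd \<gamma> show ?thesis
    by (metis append.assoc append_Cons append_Nil)
qed

lemma red_shuffle_eq:
  assumes disj: "\<Sigma>1 \<inter> \<Sigma>2 = {}" and co: "contextual_order (\<Sigma>1 \<union> \<Sigma>2) prec"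
    and lower: "wn \<Sigma>1 \<Sigma>2 \<kappa> (shuffle \<Sigma>1 \<Sigma>2 P1 P2) \<subseteq> L" and upper: "L \<subseteq> shuffle \<Sigma>1 \<Sigma>2 P1 P2"
    and red_wn: "red \<Sigma>1 \<Sigma>2 prec (shuffle \<Sigma>1 \<Sigma>2 P1 P2) \<subseteq> wn \<Sigma>1 \<Sigma>2 \<kappa> (shuffle \<Sigma>1 \<Sigma>2 P1 P2)"
  shows "red \<Sigma>1 \<Sigma>2 prec (shuffle \<Sigma>1 \<Sigma>2 P1 P2) =
    L \<inter> {w \<in> lists (\<Sigma>1 \<union> \<Sigma>2). \<forall>x a y. w = x @ a # y \<longrightarrow> a \<notin> forbidden \<Sigma>1 \<Sigma>2 prec x}"
proof (intro set_eqI iffI)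
  fix w assume w: "w \<in> red \<Sigma>1 \<Sigma>2 prec (shuffle \<Sigma>1 \<Sigma>2 P1 P2)"
  have "w \<in> L"
    using w red_wn lower by blast
  moreover have "w \<in> lists (\<Sigma>1 \<union> \<Sigma>2)"
    using w by (simp add: red_def shuffle_def)
  moreover have "\<forall>x a y. w = x @ a # y \<longrightarrow> a \<notin> forbidden \<Sigma>1 \<Sigma>2 prec x"
    using forbidden_imp_not_red[OF disj] w by blast
  ultimately show "w \<in> L \<inter> {w \<in> lists (\<Sigma>1 \<union> \<Sigma>2). \<forall>x a y. w = x @ a # y \<longrightarrow> a \<notin> forbidden \<Sigma>1 \<Sigma>2 prec x}"
    by blast
next
  fix w assume w: "w \<in> L \<inter> {w \<in> lists (\<Sigma>1 \<union> \<Sigma>2). \<forall>x a y. w = x @ a # y \<longrightarrow> a \<notin> forbidden \<Sigma>1 \<Sigma>2 prec x}"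
  then have sh: "w \<in> shuffle \<Sigma>1 \<Sigma>2 P1 P2"
    using upper by blast
  have "u = w" if "u \<in> shuffle \<Sigma>1 \<Sigma>2 P1 P2" "indep_equiv \<Sigma>1 \<Sigma>2 u w" "word_le prec u w" for u
    using smaller_equiv_imp_forbidden[OF disj co _ _ that(2,3)] that(1) w by (auto simp: shuffle_def)
  with sh show "w \<in> red \<Sigma>1 \<Sigma>2 prec (shuffle \<Sigma>1 \<Sigma>2 P1 P2)"
    unfolding red_def by blast
qed

section \<open>An automaton for the minimality condition\<close>

definition guarded_vpa :: "'a set \<Rightarrow> ('a \<Rightarrow> letter_kind) \<Rightarrow> ('q, 'g, 'a) dvpa \<Rightarrow> ('q \<Rightarrow> 'a \<Rightarrow> bool)
    \<Rightarrow> ('q, 'g, 'a) vpa" where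
  "guarded_vpa \<Sigma> \<kappa> D ok = \<lparr> states = dstates D, stack_syms = dstack_syms D,
     initial = {dinit D}, final = dstates D,
     call_tr = {(q, a, q', g) | q a q' g.
                  q \<in> dstates D \<and> a \<in> \<Sigma> \<and> \<kappa> a = Call \<and> ok q a
                  \<and> q' = fst (dcall D q a) \<and> g = snd (dcall D q a)},
     ret_tr = {(q, a, g, dret D q a g) | q a g.
                  q \<in> dstates D \<and> a \<in> \<Sigma> \<and> \<kappa> a = Ret \<and> ok q a \<and> g \<in> insert None (Some ` dstack_syms D)},
     int_tr = {(q, a, dint D q a) | q a. q \<in> dstates D \<and> a \<in> \<Sigma> \<and> \<kappa> a = Intl \<and> ok q a} \<rparr>"

lemma guarded_vpa_simps [simp]:
  "states (guarded_vpa \<Sigma> \<kappa> D ok) = dstates D" "initial (guarded_vpa \<Sigma> \<kappa> D ok) = {dinit D}"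
  "final (guarded_vpa \<Sigma> \<kappa> D ok) = dstates D"
  by (simp_all add: guarded_vpa_def)

lemma vpa_wf_guarded: "dvpa_wf \<Sigma> \<kappa> D \<Longrightarrow> vpa_wf \<Sigma> \<kappa> (guarded_vpa \<Sigma> \<kappa> D ok)"
  unfolding dvpa_wf_def vpa_wf_def guarded_vpa_def by auto (metis fst_conv snd_conv)+

lemma vpa_steps_guarded_Cons:
  assumes "q \<in> dstates D" and "set s \<subseteq> dstack_syms D" and "a \<in> \<Sigma>"
  shows "vpa_steps (guarded_vpa \<Sigma> \<kappa> D ok) \<kappa> (q, s) (a # w) c \<longleftrightarrow>
    ok q a \<and> vpa_steps (guarded_vpa \<Sigma> \<kappa> D ok) \<kappa> (dvpa_run D \<kappa> (q, s) [a]) w c"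
  using assms by (cases "\<kappa> a"; cases s; cases "dcall D q a")
    (auto simp: vpa_steps_Cons_iff guarded_vpa_def)

lemma vpa_steps_guarded_iff:
  assumes wf: "dvpa_wf \<Sigma> \<kappa> D"
  shows "w \<in> lists \<Sigma> \<Longrightarrow> q \<in> dstates D \<Longrightarrow> set s \<subseteq> dstack_syms D \<Longrightarrow>
    (\<exists>c. vpa_steps (guarded_vpa \<Sigma> \<kappa> D ok) \<kappa> (q, s) w c) \<longleftrightarrow>
    (\<forall>x a y. w = x @ a # y \<longrightarrow> ok (fst (dvpa_run D \<kappa> (q, s) x)) a)"
proof (induction w arbitrary: q s)
  case (Cons a w)
  obtain q' s' where step: "dvpa_run D \<kappa> (q, s) [a] = (q', s')" by force
  have a: "a \<in> \<Sigma>" "w \<in> lists \<Sigma>"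
    using Cons.prems(1) by auto
  have "q' \<in> dstates D" "set s' \<subseteq> dstack_syms D"
    using dvpa_run_step_closed[OF wf a(1) Cons.prems(2,3)] unfolding step by auto
  note IH = Cons.IH[OF a(2) this]
  have run: "dvpa_run D \<kappa> (q, s) (a # x) = dvpa_run D \<kappa> (q', s') x" for x
    using dvpa_run_Cons[of D \<kappa> "(q, s)" a x] unfolding step .
  have "vpa_steps (guarded_vpa \<Sigma> \<kappa> D ok) \<kappa> (q, s) (a # w) c \<longleftrightarrow>
      ok q a \<and> vpa_steps (guarded_vpa \<Sigma> \<kappa> D ok) \<kappa> (q', s') w c" for c
    using vpa_steps_guarded_Cons[OF Cons.prems(2,3) a(1), where \<kappa> = \<kappa>] unfolding step .
  moreover have "(\<forall>x b y. a # w = x @ b # y \<longrightarrow> ok (fst (dvpa_run D \<kappa> (q, s) x)) b) \<longleftrightarrow>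
      ok q a \<and> (\<forall>x b y. w = x @ b # y \<longrightarrow> ok (fst (dvpa_run D \<kappa> (q', s') x)) b)"
  proof (intro iffI conjI allI impI)
    assume H: "\<forall>x b y. a # w = x @ b # y \<longrightarrow> ok (fst (dvpa_run D \<kappa> (q, s) x)) b"
    show "ok q a"
      using H[rule_format, of "[]" a w] by simp
    fix x b y assume "w = x @ b # y"
    then show "ok (fst (dvpa_run D \<kappa> (q', s') x)) b"
      using H[rule_format, of "a # x" b y] unfolding run by simp
  next
    fix x b y
    assume H: "ok q a \<and> (\<forall>x b y. w = x @ b # y \<longrightarrow> ok (fst (dvpa_run D \<kappa> (q', s') x)) b)"
      and "a # w = x @ b # y"
    then consider "x = []" "b = a" | x' where "x = a # x'" "w = x' @ b # y"
      by (auto simp: Cons_eq_append_conv)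
    then show "ok (fst (dvpa_run D \<kappa> (q, s) x)) b"
      by cases (use H run in simp_all)
  qed
  ultimately show ?case
    using IH by blast
qed simp

lemma vpa_lang_guarded:
  assumes wf: "dvpa_wf \<Sigma> \<kappa> D"
  shows "vpa_lang \<Sigma> \<kappa> (guarded_vpa \<Sigma> \<kappa> D ok) =
    {w \<in> lists \<Sigma>. \<forall>x a y. w = x @ a # y \<longrightarrow> ok (dvpa_state D \<kappa> x) a}"
proof -
  have init: "dinit D \<in> dstates D"
    using wf by (simp add: dvpa_wf_def)
  let ?G = "guarded_vpa \<Sigma> \<kappa> D ok"
  have "q \<in> dstates D" if "vpa_steps ?G \<kappa> (dinit D, []) w (q, s)" for w q s
    using vpa_steps_states[OF that vpa_wf_guarded[OF wf]] init by simp
  then have lang: "w \<in> vpa_lang \<Sigma> \<kappa> ?G \<longleftrightarrow> w \<in> lists \<Sigma> \<and> (\<exists>c. vpa_steps ?G \<kappa> (dinit D, []) w c)" for w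
    unfolding vpa_lang_def by auto
  show ?thesis
  proof (intro set_eqI)
    fix w
    show "w \<in> vpa_lang \<Sigma> \<kappa> ?G \<longleftrightarrow> w \<in> {w \<in> lists \<Sigma>. \<forall>x a y. w = x @ a # y \<longrightarrow> ok (dvpa_state D \<kappa> x) a}"
      using lang[of w] vpa_steps_guarded_iff[OF wf _ init, of w "[]" ok] set_empty
      unfolding dvpa_state_def mem_Collect_eq by (metis empty_subsetI)
  qed
qed

definition forbidden_tracker :: "'a set \<Rightarrow> 'a set \<Rightarrow> ('q \<Rightarrow> 'a \<Rightarrow> 'a \<Rightarrow> bool) \<Rightarrow> ('q, 'g, 'a) dvpa
    \<Rightarrow> ('q \<times> 'a set, 'g, 'a) dvpa" where
  "forbidden_tracker \<Sigma>1 \<Sigma>2 ord D = \<lparr> dstates = dstates D \<times> Pow (\<Sigma>1 \<union> \<Sigma>2), dstack_syms = dstack_syms D,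
     dinit = (dinit D, {}),
     dcall = (\<lambda>(q, F) a. ((fst (dcall D q a), forbidden_update \<Sigma>1 \<Sigma>2 (ord q) a F), snd (dcall D q a))),
     dret = (\<lambda>(q, F) a g. (dret D q a g, forbidden_update \<Sigma>1 \<Sigma>2 (ord q) a F)),
     dint = (\<lambda>(q, F) a. (dint D q a, forbidden_update \<Sigma>1 \<Sigma>2 (ord q) a F)) \<rparr>"

lemma dvpa_wf_forbidden_tracker:
  "finite \<Sigma>1 \<Longrightarrow> finite \<Sigma>2 \<Longrightarrow> dvpa_wf (\<Sigma>1 \<union> \<Sigma>2) \<kappa> D \<Longrightarrow>
     dvpa_wf (\<Sigma>1 \<union> \<Sigma>2) \<kappa> (forbidden_tracker \<Sigma>1 \<Sigma>2 ord D)"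
  unfolding dvpa_wf_def forbidden_tracker_def by (auto dest: forbidden_update_subset[THEN subsetD])

lemma dvpa_run_forbidden_tracker_step:
  "dvpa_run (forbidden_tracker \<Sigma>1 \<Sigma>2 ord D) \<kappa> ((q, F), s) [a] =
     ((fst (dvpa_run D \<kappa> (q, s) [a]), forbidden_update \<Sigma>1 \<Sigma>2 (ord q) a F), snd (dvpa_run D \<kappa> (q, s) [a]))"
  by (cases "\<kappa> a"; cases s) (simp_all add: forbidden_tracker_def)

lemma dvpa_state_forbidden_tracker:
  assumes ord: "\<forall>w \<in> lists (\<Sigma>1 \<union> \<Sigma>2). prec w = ord (dvpa_state D \<kappa> w)"
    and x: "x \<in> lists (\<Sigma>1 \<union> \<Sigma>2)"
  shows "dvpa_state (forbidden_tracker \<Sigma>1 \<Sigma>2 ord D) \<kappa> x = (dvpa_state D \<kappa> x, forbidden \<Sigma>1 \<Sigma>2 prec x)"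
proof -
  let ?T = "forbidden_tracker \<Sigma>1 \<Sigma>2 ord D"
  have "dvpa_run ?T \<kappa> (dinit ?T, []) x =
      ((fst (dvpa_run D \<kappa> (dinit D, []) x), forbidden \<Sigma>1 \<Sigma>2 prec x), snd (dvpa_run D \<kappa> (dinit D, []) x))"
    using x
  proof (induction x rule: rev_induct)
    case Nil
    then show ?case by (simp add: forbidden_tracker_def)
  next
    case (snoc a x)
    then have "prec x = ord (fst (dvpa_run D \<kappa> (dinit D, []) x))"
      using ord by (simp add: dvpa_state_def)
    with snoc show ?case
      by (simp add: dvpa_run_append dvpa_run_forbidden_tracker_step forbidden_snoc del: dvpa_run.simps(2))
  qed
  then show ?thesis
    by (simp add: dvpa_state_def)
qed

definition forbidden_checker :: "'a set \<Rightarrow> 'a set \<Rightarrow> ('a \<Rightarrow> letter_kind) \<Rightarrow> ('q \<Rightarrow> 'a \<Rightarrow> 'a \<Rightarrow> bool)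
    \<Rightarrow> ('q, 'g, 'a) dvpa \<Rightarrow> ('q \<times> 'a set, 'g, 'a) vpa" where
  "forbidden_checker \<Sigma>1 \<Sigma>2 \<kappa> ord D =
     guarded_vpa (\<Sigma>1 \<union> \<Sigma>2) \<kappa> (forbidden_tracker \<Sigma>1 \<Sigma>2 ord D) (\<lambda>(q, F) a. a \<notin> F)"

lemma vpa_wf_forbidden_checker:
  "finite \<Sigma>1 \<Longrightarrow> finite \<Sigma>2 \<Longrightarrow> dvpa_wf (\<Sigma>1 \<union> \<Sigma>2) \<kappa> D \<Longrightarrow>
     vpa_wf (\<Sigma>1 \<union> \<Sigma>2) \<kappa> (forbidden_checker \<Sigma>1 \<Sigma>2 \<kappa> ord D)"
  unfolding forbidden_checker_def by (intro vpa_wf_guarded dvpa_wf_forbidden_tracker)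

lemma vpa_lang_forbidden_checker:
  assumes "finite \<Sigma>1" and "finite \<Sigma>2" and D: "dvpa_wf (\<Sigma>1 \<union> \<Sigma>2) \<kappa> D"
    and ord: "\<forall>w \<in> lists (\<Sigma>1 \<union> \<Sigma>2). prec w = ord (dvpa_state D \<kappa> w)"
  shows "vpa_lang (\<Sigma>1 \<union> \<Sigma>2) \<kappa> (forbidden_checker \<Sigma>1 \<Sigma>2 \<kappa> ord D) =
    {w \<in> lists (\<Sigma>1 \<union> \<Sigma>2). \<forall>x a y. w = x @ a # y \<longrightarrow> a \<notin> forbidden \<Sigma>1 \<Sigma>2 prec x}"
  unfolding forbidden_checker_def vpa_lang_guarded[OF dvpa_wf_forbidden_tracker[OF assms(1-3)]]
  using dvpa_state_forbidden_tracker[OF ord] by fastforce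

section \<open>Well-nested shuffles\<close>

definition vpa_shuffle :: "('p, 'g, 'a) vpa \<Rightarrow> ('q, 'h, 'a) vpa \<Rightarrow> ('p \<times> 'q, 'g + 'h, 'a) vpa" where
  "vpa_shuffle A B = \<lparr> states = states A \<times> states B, stack_syms = stack_syms A <+> stack_syms B,
     initial = initial A \<times> initial B, final = final A \<times> final B,
     call_tr = {((p, q), a, (p', q), Inl g) | p q a p' g. (p, a, p', g) \<in> call_tr A \<and> q \<in> states B}
             \<union> {((p, q), a, (p, q'), Inr h) | p q a q' h. (q, a, q', h) \<in> call_tr B \<and> p \<in> states A},
     ret_tr = {((p, q), a, Some (Inl g), (p', q)) | p q a p' g. (p, a, Some g, p') \<in> ret_tr A \<and> q \<in> states B}
            \<union> {((p, q), a, Some (Inr h), (p, q')) | p q a q' h. (q, a, Some h, q') \<in> ret_tr B \<and> p \<in> states A},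
     int_tr = {((p, q), a, (p', q)) | p q a p'. (p, a, p') \<in> int_tr A \<and> q \<in> states B}
            \<union> {((p, q), a, (p, q')) | p q a q'. (q, a, q') \<in> int_tr B \<and> p \<in> states A} \<rparr>"

lemma vpa_shuffle_simps [simp]:
  "states (vpa_shuffle A B) = states A \<times> states B"
  "initial (vpa_shuffle A B) = initial A \<times> initial B" "final (vpa_shuffle A B) = final A \<times> final B"
  by (simp_all add: vpa_shuffle_def)

fun lefts :: "('g + 'h) list \<Rightarrow> 'g list" where
  "lefts [] = []"
| "lefts (Inl g # S) = g # lefts S"
| "lefts (Inr h # S) = lefts S"

fun rights :: "('g + 'h) list \<Rightarrow> 'h list" where
  "rights [] = []"
| "rights (Inl g # S) = rights S"
| "rights (Inr h # S) = h # rights S"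

lemma vpa_wf_shuffle:
  assumes A: "vpa_wf \<Sigma>1 \<kappa> A" and B: "vpa_wf \<Sigma>2 \<kappa> B"
  shows "vpa_wf (\<Sigma>1 \<union> \<Sigma>2) \<kappa> (vpa_shuffle A B)"
proof -
  have "finite (states A)" "finite (stack_syms A)" "initial A \<subseteq> states A" "final A \<subseteq> states A"
    "finite (states B)" "finite (stack_syms B)" "initial B \<subseteq> states B" "final B \<subseteq> states B"
    using A B by (simp_all add: vpa_wf_def)
  then show ?thesis
    unfolding vpa_wf_def vpa_shuffle_def
    by (auto dest: vpa_wf_call[OF A] vpa_wf_call[OF B] vpa_wf_ret[OF A] vpa_wf_ret[OF B]
        vpa_wf_int[OF A] vpa_wf_int[OF B])
qed

lemma vpa_steps_shuffleD:
  assumes A: "vpa_wf \<Sigma>1 \<kappa> A" and B: "vpa_wf \<Sigma>2 \<kappa> B" and disj: "\<Sigma>1 \<inter> \<Sigma>2 = {}"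
  shows "vpa_steps (vpa_shuffle A B) \<kappa> c w c' \<Longrightarrow>
    vpa_steps A \<kappa> (fst (fst c), lefts (snd c)) (filter (\<lambda>x. x \<in> \<Sigma>1) w) (fst (fst c'), lefts (snd c'))
  \<and> vpa_steps B \<kappa> (snd (fst c), rights (snd c)) (filter (\<lambda>x. x \<in> \<Sigma>2) w) (snd (fst c'), rights (snd c'))"
proof (induction rule: vpa_steps.induct)
  case (st_call a x x' G s w c)
  from st_call.hyps(2) consider
      (left) p q p' g where "x = (p, q)" "x' = (p', q)" "G = Inl g" "(p, a, p', g) \<in> call_tr A"
    | (right) p q q' h where "x = (p, q)" "x' = (p, q')" "G = Inr h" "(q, a, q', h) \<in> call_tr B"
    by (auto simp: vpa_shuffle_def)
  then show ?case
  proof cases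
    case left
    with vpa_wf_call[OF A] disj have "a \<in> \<Sigma>1" "a \<notin> \<Sigma>2" by blast+
    with left st_call show ?thesis by (auto intro: vpa_steps.st_call)
  next
    case right
    with vpa_wf_call[OF B] disj have "a \<in> \<Sigma>2" "a \<notin> \<Sigma>1" by blast+
    with right st_call show ?thesis by (auto intro: vpa_steps.st_call)
  qed
next
  case (st_ret a x G x' s w c)
  from st_ret.hyps(2) consider
      (left) p q p' g where "x = (p, q)" "x' = (p', q)" "G = Inl g" "(p, a, Some g, p') \<in> ret_tr A"
    | (right) p q q' h where "x = (p, q)" "x' = (p, q')" "G = Inr h" "(q, a, Some h, q') \<in> ret_tr B"
    by (auto simp: vpa_shuffle_def)
  then show ?case
  proof cases
    case left
    with vpa_wf_ret[OF A] disj have "a \<in> \<Sigma>1" "a \<notin> \<Sigma>2" by blast+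
    with left st_ret show ?thesis by (auto intro: vpa_steps.st_ret)
  next
    case right
    with vpa_wf_ret[OF B] disj have "a \<in> \<Sigma>2" "a \<notin> \<Sigma>1" by blast+
    with right st_ret show ?thesis by (auto intro: vpa_steps.st_ret)
  qed
next
  case (st_ret_bot a x x' w c)
  then show ?case by (simp add: vpa_shuffle_def)
next
  case (st_int a x x' s w c)
  from st_int.hyps(2) consider
      (left) p q p' where "x = (p, q)" "x' = (p', q)" "(p, a, p') \<in> int_tr A"
    | (right) p q q' where "x = (p, q)" "x' = (p, q')" "(q, a, q') \<in> int_tr B"
    by (auto simp: vpa_shuffle_def)
  then show ?case
  proof cases
    case left
    with vpa_wf_int[OF A] disj have "a \<in> \<Sigma>1" "a \<notin> \<Sigma>2" by blast+
    with left st_int show ?thesis by (auto intro: vpa_steps.st_int)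
  next
    case right
    with vpa_wf_int[OF B] disj have "a \<in> \<Sigma>2" "a \<notin> \<Sigma>1" by blast+
    with right st_int show ?thesis by (auto intro: vpa_steps.st_int)
  qed
qed simp

lemma vpa_lang_shuffle_subset:
  assumes A: "vpa_wf \<Sigma>1 \<kappa> A" and B: "vpa_wf \<Sigma>2 \<kappa> B" and disj: "\<Sigma>1 \<inter> \<Sigma>2 = {}"
  shows "vpa_lang (\<Sigma>1 \<union> \<Sigma>2) \<kappa> (vpa_shuffle A B) \<subseteq> shuffle \<Sigma>1 \<Sigma>2 (vpa_lang \<Sigma>1 \<kappa> A) (vpa_lang \<Sigma>2 \<kappa> B)"
proof
  fix w assume "w \<in> vpa_lang (\<Sigma>1 \<union> \<Sigma>2) \<kappa> (vpa_shuffle A B)"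
  then obtain p q p' q' S where w: "w \<in> lists (\<Sigma>1 \<union> \<Sigma>2)" "p \<in> initial A" "q \<in> initial B"
    "p' \<in> final A" "q' \<in> final B" "vpa_steps (vpa_shuffle A B) \<kappa> ((p, q), []) w ((p', q'), S)"
    unfolding vpa_lang_def by auto
  from vpa_steps_shuffleD[OF A B disj w(6)] w(1-5)
  show "w \<in> shuffle \<Sigma>1 \<Sigma>2 (vpa_lang \<Sigma>1 \<kappa> A) (vpa_lang \<Sigma>2 \<kappa> B)"
    unfolding shuffle_def vpa_lang_def by auto
qed

lemma vpa_shuffle_step_left:
  assumes A: "vpa_wf \<Sigma>1 \<kappa> A" and q: "q \<in> states B"
    and top: "\<kappa> a = Ret \<Longrightarrow> \<exists>g S0. S = Inl g # S0"
    and run: "vpa_steps A \<kappa> (p, lefts S) (a # u) c"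
  obtains p' S' where "vpa_steps (vpa_shuffle A B) \<kappa> ((p, q), S) [a] ((p', q), S')"
    and "vpa_steps A \<kappa> (p', lefts S') u c" and "rights S' = rights S" and "p' \<in> states A"
    and "map isl S' = (case \<kappa> a of Call \<Rightarrow> True # map isl S | Ret \<Rightarrow> tl (map isl S) | Intl \<Rightarrow> map isl S)"
proof -
  from run consider
      (call) p' g where "\<kappa> a = Call" "(p, a, p', g) \<in> call_tr A" "vpa_steps A \<kappa> (p', g # lefts S) u c"
    | (ret) g S0 p' where "\<kappa> a = Ret" "S = Inl g # S0" "(p, a, Some g, p') \<in> ret_tr A"
        "vpa_steps A \<kappa> (p', lefts S0) u c"
    | (int) p' where "\<kappa> a = Intl" "(p, a, p') \<in> int_tr A" "vpa_steps A \<kappa> (p', lefts S) u c"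
    using top by (auto simp: vpa_steps_Cons_iff)
  then show ?thesis
  proof cases
    case call
    then show ?thesis
      using vpa_wf_call[OF A call(2)] q
      by (intro that[of p' "Inl g # S"]) (auto simp: vpa_shuffle_def intro!: vpa_steps.st_call)
  next
    case ret
    then show ?thesis
      using vpa_wf_ret[OF A ret(3)] q
      by (intro that[of p' S0]) (auto simp: vpa_shuffle_def intro!: vpa_steps.st_ret)
  next
    case int
    then show ?thesis
      using vpa_wf_int[OF A int(2)] q
      by (intro that[of p' S]) (auto simp: vpa_shuffle_def intro!: vpa_steps.st_int)
  qed
qed

lemma vpa_shuffle_step_right:
  assumes B: "vpa_wf \<Sigma>2 \<kappa> B" and p: "p \<in> states A"
    and top: "\<kappa> a = Ret \<Longrightarrow> \<exists>h S0. S = Inr h # S0"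
    and run: "vpa_steps B \<kappa> (q, rights S) (a # u) c"
  obtains q' S' where "vpa_steps (vpa_shuffle A B) \<kappa> ((p, q), S) [a] ((p, q'), S')"
    and "vpa_steps B \<kappa> (q', rights S') u c" and "lefts S' = lefts S" and "q' \<in> states B"
    and "map isl S' = (case \<kappa> a of Call \<Rightarrow> False # map isl S | Ret \<Rightarrow> tl (map isl S) | Intl \<Rightarrow> map isl S)"
proof -
  from run consider
      (call) q' h where "\<kappa> a = Call" "(q, a, q', h) \<in> call_tr B" "vpa_steps B \<kappa> (q', h # rights S) u c"
    | (ret) h S0 q' where "\<kappa> a = Ret" "S = Inr h # S0" "(q, a, Some h, q') \<in> ret_tr B"
        "vpa_steps B \<kappa> (q', rights S0) u c"
    | (int) q' where "\<kappa> a = Intl" "(q, a, q') \<in> int_tr B" "vpa_steps B \<kappa> (q', rights S) u c"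
    using top by (auto simp: vpa_steps_Cons_iff)
  then show ?thesis
  proof cases
    case call
    then show ?thesis
      using vpa_wf_call[OF B call(2)] p
      by (intro that[of q' "Inr h # S"]) (auto simp: vpa_shuffle_def intro!: vpa_steps.st_call)
  next
    case ret
    then show ?thesis
      using vpa_wf_ret[OF B ret(3)] p
      by (intro that[of q' S0]) (auto simp: vpa_shuffle_def intro!: vpa_steps.st_ret)
  next
    case int
    then show ?thesis
      using vpa_wf_int[OF B int(2)] p
      by (intro that[of q' S]) (auto simp: vpa_shuffle_def intro!: vpa_steps.st_int)
  qed
qed

lemma vpa_steps_shuffleI:
  assumes A: "vpa_wf \<Sigma>1 \<kappa> A" and B: "vpa_wf \<Sigma>2 \<kappa> B" and disj: "\<Sigma>1 \<inter> \<Sigma>2 = {}"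
    and w: "w \<in> lists (\<Sigma>1 \<union> \<Sigma>2)"
    and aligned: "\<And>x a y. w = x @ a # y \<Longrightarrow> \<kappa> a = Ret \<Longrightarrow>
      \<exists>c rest. pending_calls \<kappa> x = c # rest \<and> (c \<in> \<Sigma>1 \<longleftrightarrow> a \<in> \<Sigma>1)"
  shows "u @ v = w \<Longrightarrow> map isl S = map (\<lambda>c. c \<in> \<Sigma>1) (pending_calls \<kappa> u) \<Longrightarrow>
    p \<in> states A \<Longrightarrow> q \<in> states B \<Longrightarrow>
    vpa_steps A \<kappa> (p, lefts S) (filter (\<lambda>x. x \<in> \<Sigma>1) v) (p', s) \<Longrightarrow>
    vpa_steps B \<kappa> (q, rights S) (filter (\<lambda>x. x \<in> \<Sigma>2) v) (q', t) \<Longrightarrow>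
    \<exists>S'. vpa_steps (vpa_shuffle A B) \<kappa> ((p, q), S) v ((p', q'), S')"
proof (induction v arbitrary: u p q S)
  case (Cons a v)
  have top: "(a \<in> \<Sigma>1 \<longrightarrow> (\<exists>g S0. S = Inl g # S0)) \<and> (a \<notin> \<Sigma>1 \<longrightarrow> (\<exists>h S0. S = Inr h # S0))"
    if ret: "\<kappa> a = Ret"
  proof -
    obtain c rest where "pending_calls \<kappa> u = c # rest" "c \<in> \<Sigma>1 \<longleftrightarrow> a \<in> \<Sigma>1"
      using aligned[OF Cons.prems(1)[symmetric] ret] by blast
    with Cons.prems(2) obtain e S0 where "S = e # S0" "isl e \<longleftrightarrow> a \<in> \<Sigma>1"
      by (cases S) auto
    then show ?thesis
      by (cases e) auto
  qed
  have tags: "map (\<lambda>c. c \<in> \<Sigma>1) (pending_calls \<kappa> (u @ [a])) =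
      (case \<kappa> a of Call \<Rightarrow> (a \<in> \<Sigma>1) # map isl S | Ret \<Rightarrow> tl (map isl S) | Intl \<Rightarrow> map isl S)"
    using Cons.prems(2) by (cases "\<kappa> a") (simp_all add: map_tl)
  have u': "(u @ [a]) @ v = w"
    using Cons.prems(1) by simp
  have "a \<in> \<Sigma>1 \<or> a \<in> \<Sigma>2"
    using w Cons.prems(1) by auto
  then show ?case
  proof
    assume a: "a \<in> \<Sigma>1"
    with disj have "a \<notin> \<Sigma>2" by blast
    have top1: "\<exists>g S0. S = Inl g # S0" if "\<kappa> a = Ret"
      using top[OF that] a by blast
    have run: "vpa_steps A \<kappa> (p, lefts S) (a # filter (\<lambda>x. x \<in> \<Sigma>1) v) (p', s)"
      using Cons.prems(5) a by simp
    obtain p1 S1 where step: "vpa_steps (vpa_shuffle A B) \<kappa> ((p, q), S) [a] ((p1, q), S1)"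
      and run1: "vpa_steps A \<kappa> (p1, lefts S1) (filter (\<lambda>x. x \<in> \<Sigma>1) v) (p', s)"
      and "rights S1 = rights S" "p1 \<in> states A"
      and "map isl S1 = (case \<kappa> a of Call \<Rightarrow> True # map isl S | Ret \<Rightarrow> tl (map isl S) | Intl \<Rightarrow> map isl S)"
      by (rule vpa_shuffle_step_left[OF A Cons.prems(4) top1 run])
    moreover have "map isl S1 = map (\<lambda>c. c \<in> \<Sigma>1) (pending_calls \<kappa> (u @ [a]))"
      using calculation(5) tags a by (cases "\<kappa> a") simp_all
    ultimately obtain S' where "vpa_steps (vpa_shuffle A B) \<kappa> ((p1, q), S1) v ((p', q'), S')"
      using Cons.IH[OF u' _ _ Cons.prems(4) run1] Cons.prems(6) \<open>a \<notin> \<Sigma>2\<close> by auto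
    with step show ?thesis
      using vpa_steps_append by fastforce
  next
    assume a: "a \<in> \<Sigma>2"
    with disj have "a \<notin> \<Sigma>1" by blast
    have top2: "\<exists>h S0. S = Inr h # S0" if "\<kappa> a = Ret"
      using top[OF that] \<open>a \<notin> \<Sigma>1\<close> by blast
    have run: "vpa_steps B \<kappa> (q, rights S) (a # filter (\<lambda>x. x \<in> \<Sigma>2) v) (q', t)"
      using Cons.prems(6) a by simp
    obtain q1 S1 where step: "vpa_steps (vpa_shuffle A B) \<kappa> ((p, q), S) [a] ((p, q1), S1)"
      and run1: "vpa_steps B \<kappa> (q1, rights S1) (filter (\<lambda>x. x \<in> \<Sigma>2) v) (q', t)"
      and "lefts S1 = lefts S" "q1 \<in> states B"
      and "map isl S1 = (case \<kappa> a of Call \<Rightarrow> False # map isl S | Ret \<Rightarrow> tl (map isl S) | Intl \<Rightarrow> map isl S)"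
      by (rule vpa_shuffle_step_right[OF B Cons.prems(3) top2 run])
    moreover have "map isl S1 = map (\<lambda>c. c \<in> \<Sigma>1) (pending_calls \<kappa> (u @ [a]))"
      using calculation(5) tags \<open>a \<notin> \<Sigma>1\<close> by (cases "\<kappa> a") simp_all
    ultimately obtain S' where "vpa_steps (vpa_shuffle A B) \<kappa> ((p, q1), S1) v ((p', q'), S')"
      using Cons.IH[OF u' _ Cons.prems(3) _ _ run1] Cons.prems(5) \<open>a \<notin> \<Sigma>1\<close> by auto
    with step show ?thesis
      using vpa_steps_append by fastforce
  qed
qed auto

lemma wn_shuffle_subset_vpa_lang_shuffle:
  assumes A: "vpa_wf \<Sigma>1 \<kappa> A" and B: "vpa_wf \<Sigma>2 \<kappa> B" and disj: "\<Sigma>1 \<inter> \<Sigma>2 = {}"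
    and wm1: "\<forall>u \<in> vpa_lang \<Sigma>1 \<kappa> A. well_matched \<kappa> u" and wm2: "\<forall>u \<in> vpa_lang \<Sigma>2 \<kappa> B. well_matched \<kappa> u"
  shows "wn \<Sigma>1 \<Sigma>2 \<kappa> (shuffle \<Sigma>1 \<Sigma>2 (vpa_lang \<Sigma>1 \<kappa> A) (vpa_lang \<Sigma>2 \<kappa> B))
    \<subseteq> vpa_lang (\<Sigma>1 \<union> \<Sigma>2) \<kappa> (vpa_shuffle A B)"
proof
  fix w assume "w \<in> wn \<Sigma>1 \<Sigma>2 \<kappa> (shuffle \<Sigma>1 \<Sigma>2 (vpa_lang \<Sigma>1 \<kappa> A) (vpa_lang \<Sigma>2 \<kappa> B))"
  then have w: "w \<in> lists (\<Sigma>1 \<union> \<Sigma>2)" "well_nested \<Sigma>1 \<Sigma>2 \<kappa> w"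
    and w1: "filter (\<lambda>x. x \<in> \<Sigma>1) w \<in> vpa_lang \<Sigma>1 \<kappa> A" and w2: "filter (\<lambda>x. x \<in> \<Sigma>2) w \<in> vpa_lang \<Sigma>2 \<kappa> B"
    unfolding wn_def shuffle_def by auto
  from w1 obtain p p' s where p: "p \<in> initial A" "p' \<in> final A"
    "vpa_steps A \<kappa> (p, []) (filter (\<lambda>x. x \<in> \<Sigma>1) w) (p', s)"
    unfolding vpa_lang_def by blast
  from w2 obtain q q' t where q: "q \<in> initial B" "q' \<in> final B"
    "vpa_steps B \<kappa> (q, []) (filter (\<lambda>x. x \<in> \<Sigma>2) w) (q', t)"
    unfolding vpa_lang_def by blast
  have "initial A \<subseteq> states A" "initial B \<subseteq> states B"
    using A B by (simp_all add: vpa_wf_def)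
  with p(1) q(1) have states: "p \<in> states A" "q \<in> states B"
    by auto
  have aligned: "\<exists>c rest. pending_calls \<kappa> x = c # rest \<and> (c \<in> \<Sigma>1 \<longleftrightarrow> a \<in> \<Sigma>1)"
    if "w = x @ a # y" "\<kappa> a = Ret" for x a y
    using well_nested_return_matches_pending_call[OF disj w(1) _ _ w(2) that]
      wm1[rule_format, OF w1] wm2[rule_format, OF w2] by blast
  have "\<exists>S'. vpa_steps (vpa_shuffle A B) \<kappa> ((p, q), []) w ((p', q'), S')"
    by (rule vpa_steps_shuffleI[OF A B disj w(1) aligned, where u = "[]"])
      (use states p(3) q(3) in simp_all)
  with w(1) p(1,2) q(1,2) show "w \<in> vpa_lang (\<Sigma>1 \<union> \<Sigma>2) \<kappa> (vpa_shuffle A B)"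
    unfolding vpa_lang_def by fastforce
qed

theorem theorem3p14:
  fixes \<Sigma>1 \<Sigma>2 :: "'a set"
    and \<kappa> :: "'a \<Rightarrow> letter_kind"
    and P1 P2 :: "'a list set"
    and prec :: "'a list \<Rightarrow> 'a \<Rightarrow> 'a \<Rightarrow> bool"
  assumes "finite \<Sigma>1" and "finite \<Sigma>2" and "\<Sigma>1 \<inter> \<Sigma>2 = {}"
    and "P1 \<subseteq> lists \<Sigma>1" and "P2 \<subseteq> lists \<Sigma>2"
    and "\<forall>w \<in> P1. well_matched \<kappa> w" and "\<forall>w \<in> P2. well_matched \<kappa> w"
    and "is_vpl \<Sigma>1 \<kappa> P1" and "is_vpl \<Sigma>2 \<kappa> P2"
    and "vp_contextual_order (\<Sigma>1 \<union> \<Sigma>2) \<kappa> prec"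
    and "red \<Sigma>1 \<Sigma>2 prec (shuffle \<Sigma>1 \<Sigma>2 P1 P2)
           \<subseteq> wn \<Sigma>1 \<Sigma>2 \<kappa> (shuffle \<Sigma>1 \<Sigma>2 P1 P2)"
  shows "is_vpl (\<Sigma>1 \<union> \<Sigma>2) \<kappa> (red \<Sigma>1 \<Sigma>2 prec (shuffle \<Sigma>1 \<Sigma>2 P1 P2))"
proof -
  obtain A1 :: "(nat, nat, 'a) vpa" where A1: "vpa_wf \<Sigma>1 \<kappa> A1" and P1: "vpa_lang \<Sigma>1 \<kappa> A1 = P1"
    using assms(8) unfolding is_vpl_def by blast
  obtain A2 :: "(nat, nat, 'a) vpa" where A2: "vpa_wf \<Sigma>2 \<kappa> A2" and P2: "vpa_lang \<Sigma>2 \<kappa> A2 = P2"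
    using assms(9) unfolding is_vpl_def by blast
  have co: "contextual_order (\<Sigma>1 \<union> \<Sigma>2) prec"
    using assms(10) by (simp add: vp_contextual_order_def)
  obtain D :: "(nat, nat, 'a) dvpa" and ord
    where D: "dvpa_wf (\<Sigma>1 \<union> \<Sigma>2) \<kappa> D" and ord: "\<forall>w \<in> lists (\<Sigma>1 \<union> \<Sigma>2). prec w = ord (dvpa_state D \<kappa> w)"
    using assms(10) unfolding vp_contextual_order_def by blast
  let ?M = "vpa_inter (vpa_shuffle A1 A2) (forbidden_checker \<Sigma>1 \<Sigma>2 \<kappa> ord D)"
  have "wn \<Sigma>1 \<Sigma>2 \<kappa> (shuffle \<Sigma>1 \<Sigma>2 P1 P2) \<subseteq> vpa_lang (\<Sigma>1 \<union> \<Sigma>2) \<kappa> (vpa_shuffle A1 A2)"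
    using wn_shuffle_subset_vpa_lang_shuffle[OF A1 A2 assms(3) assms(6,7)[folded P1 P2]]
    unfolding P1 P2 .
  moreover have "vpa_lang (\<Sigma>1 \<union> \<Sigma>2) \<kappa> (vpa_shuffle A1 A2) \<subseteq> shuffle \<Sigma>1 \<Sigma>2 P1 P2"
    using vpa_lang_shuffle_subset[OF A1 A2 assms(3)] unfolding P1 P2 .
  ultimately have "red \<Sigma>1 \<Sigma>2 prec (shuffle \<Sigma>1 \<Sigma>2 P1 P2) = vpa_lang (\<Sigma>1 \<union> \<Sigma>2) \<kappa> ?M"
    unfolding vpa_lang_inter vpa_lang_forbidden_checker[OF assms(1,2) D ord]
    by (rule red_shuffle_eq[OF assms(3) co _ _ assms(11)])
  moreover have "vpa_wf (\<Sigma>1 \<union> \<Sigma>2) \<kappa> ?M"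
    using A1 A2 vpa_wf_forbidden_checker[OF assms(1,2) D]
    by (intro vpa_wf_inter vpa_wf_shuffle)
  ultimately show ?thesis
    by (simp add: is_vpl_vpa_lang)
qed

end
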